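(* Fix $0<\alpha<1$ and an integer $l\ge1$, let $\phi_\alpha(t)=t^{\alpha-1}E_{\alpha,\alpha}(-t^{\alpha})$ with Laplace convolution powers $\phi_\alpha^{*n}$. Then for every $w\in\mathbb{C}$ with $|w|\le1$ and $t>0$, $$t^{l\alpha-1}E^{l}_{\alpha,l\alpha}\big(-(1-w)t^{\alpha}\big)=\sum_{n=0}^{\infty}\frac{(l)_n}{n!}\,w^n\,\phi_\alpha^{*(n+l)}(t)=\sum_{n=0}^{\infty}\frac{(l)_n}{n!}\,w^n\,\frac{t^{\alpha l-1}t^{\alpha n}}{(n+l-1)!}E^{(n+l-1)}_{\alpha,\alpha}(-t^{\alpha}),$$ where $E^{(m)}_{\alpha,\alpha}(y)=\frac{d^m}{dy^m}E_{\alpha,\alpha}(y)$.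
   Context: $E^{\gamma}_{\alpha,\beta}(x)=\sum_{k\ge0}\frac{(\gamma)_k x^k}{\Gamma(\alpha k+\beta)\,k!}$ with Pochhammer symbol $(\gamma)_k=\gamma(\gamma+1)\cdots(\gamma+k-1)$, $(\gamma)_0=1$, and $E_{\alpha,\beta}=E^1_{\alpha,\beta}$. Laplace convolution $(f*g)(t)=\int_0^t f(t-u)g(u)\,du$, $\phi^{*1}=\phi$, $\phi^{*(n+1)}=\phi^{*n}*\phi$. *)

theory Defs
  imports "HOL-Analysis.Analysis"
begin

definition prabhakar :: "real \<Rightarrow> real \<Rightarrow> real \<Rightarrow> complex \<Rightarrow> complex" where
  "prabhakar \<gamma> \<alpha> \<beta> x =
     (\<Sum>k. pochhammer (complex_of_real \<gamma>) k * x ^ k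
            / (complex_of_real (Gamma (\<alpha> * real k + \<beta>)) * fact k))"

definition ML2 :: "real \<Rightarrow> real \<Rightarrow> complex \<Rightarrow> complex" where
  "ML2 \<alpha> \<beta> = prabhakar 1 \<alpha> \<beta>"

definition lconv :: "(real \<Rightarrow> complex) \<Rightarrow> (real \<Rightarrow> complex) \<Rightarrow> real \<Rightarrow> complex" where
  "lconv f g t = integral {0..t} (\<lambda>u. f (t - u) * g u)"

text \<open>Convolution powers: phi^{*1} = phi, phi^{*(n+1)} = phi^{*n} * phi
  (the value at index 0 is irrelevant and set to phi).\<close>
fun conv_pow :: "(real \<Rightarrow> complex) \<Rightarrow> nat \<Rightarrow> real \<Rightarrow> complex" where
  "conv_pow \<phi> 0 = \<phi>"
| "conv_pow \<phi> (Suc 0) = \<phi>"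
| "conv_pow \<phi> (Suc (Suc n)) = lconv (conv_pow \<phi> (Suc n)) \<phi>"

definition phi_ml :: "real \<Rightarrow> real \<Rightarrow> complex" where
  "phi_ml \<alpha> t = complex_of_real (t powr (\<alpha> - 1)) * ML2 \<alpha> \<alpha> (- complex_of_real (t powr \<alpha>))"

end

theory Submission
  imports Defs "HOL-Real_Asymp.Real_Asymp"
begin

(* Write f(g,b)(t) = t^(b-1) E^g_{a,b}(-t^a). Integrating the power series termwise against each
   other, every product of monomials gives a Beta integral, and the Vandermonde identity for
   Pochhammer symbols collects the result into the semigroup law
   f(g1,b1) * f(g2,b2) = f(g1+g2, b1+b2). As phi_a = f(1,a), this gives phi_a^{*n} = f(n, n a).
   Expanding f(n+l, (n+l) a)(t) in powers of t^a and summing the absolutely convergent double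
   series along the diagonals, the binomial theorem turns sum_n (l)_n w^n / n! f(n+l, (n+l) a)(t)
   into t^(l a - 1) E^l_{a,l a}(-(1-w) t^a). The second series agrees with the first term by term,
   because termwise differentiation gives d^m E_{a,a} = m! E^{m+1}_{a,(m+1) a}.
   All series converge absolutely for 0 < a < 1, by the ratio test and the bound
   Gamma(x + a) >= (x + a - 1)^a Gamma(x) that follows from the log-convexity of Gamma. *)

section \<open>Prabhakar coefficients\<close>

lemma powr_mult_Gamma_le_Gamma_add:
  fixes x a :: real
  assumes a: "0 < a" "a < 1" and x: "x + a - 1 > 0"
  shows "(x + a - 1) powr a * Gamma x \<le> Gamma (x + a)"
proof -
  \<comment> \<open>\<open>x\<close> is the convex combination \<open>a (x + a - 1) + (1 - a) (x + a)\<close>\<close>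
  have "(ln \<circ> Gamma) ((1 - (1 - a)) *\<^sub>R (x + a - 1) + (1 - a) *\<^sub>R (x + a))
      \<le> (1 - (1 - a)) * (ln \<circ> Gamma) (x + a - 1) + (1 - a) * (ln \<circ> Gamma) (x + a)"
    by (rule convex_onD[OF log_convex_Gamma_real]) (use a x in auto)
  moreover have "(1 - (1 - a)) *\<^sub>R (x + a - 1) + (1 - a) *\<^sub>R (x + a) = x"
    by (simp add: algebra_simps)
  ultimately have convex: "ln (Gamma x) \<le> a * ln (Gamma (x + a - 1)) + (1 - a) * ln (Gamma (x + a))"
    by simp
  have "x + a - 1 \<notin> \<int>\<^sub>\<le>\<^sub>0"
    using x by (auto elim!: nonpos_Ints_cases)
  then have "Gamma (x + a) = (x + a - 1) * Gamma (x + a - 1)"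
    using Gamma_plus1[of "x + a - 1"] by simp
  then have "ln (Gamma (x + a)) = ln (x + a - 1) + ln (Gamma (x + a - 1))"
    using x by (simp add: ln_mult_pos)
  with convex have "a * ln (x + a - 1) + ln (Gamma x) \<le> ln (Gamma (x + a))"
    by (simp add: algebra_simps)
  then have "exp (a * ln (x + a - 1) + ln (Gamma x)) \<le> exp (ln (Gamma (x + a)))"
    by simp
  then show ?thesis
    using x a by (simp add: exp_add powr_def)
qed

definition prabhakar_coeff :: "real \<Rightarrow> real \<Rightarrow> real \<Rightarrow> nat \<Rightarrow> real" where
  "prabhakar_coeff g a b k = pochhammer g k / (Gamma (a * real k + b) * fact k)"

lemma prabhakar_coeff_pos:
  "g > 0 \<Longrightarrow> a > 0 \<Longrightarrow> b > 0 \<Longrightarrow> prabhakar_coeff g a b k > 0"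
  unfolding prabhakar_coeff_def
  by (intro divide_pos_pos mult_pos_pos pochhammer_pos Gamma_real_pos) (auto intro: add_nonneg_pos)

lemma prabhakar_coeff_Suc_le:
  assumes g: "g > 0" and a: "0 < a" "a < 1" and b: "b > 0"
    and M: "(a * real k + b + a - 1) powr a \<ge> M" "M > 0" and pos: "a * real k + b + a - 1 > 0"
  shows "prabhakar_coeff g a b (Suc k)
           \<le> prabhakar_coeff g a b k * ((g + real k) / (M * (real k + 1)))"
proof -
  have Gk: "Gamma (a * real k + b) > 0" and GSk: "Gamma (a * real (Suc k) + b) > 0"
    using a b by (auto intro!: Gamma_real_pos add_nonneg_pos)
  have "(a * real k + b + a - 1) powr a * Gamma (a * real k + b) \<le> Gamma (a * real (Suc k) + b)"
    using powr_mult_Gamma_le_Gamma_add[of a "a * real k + b"] a pos by (simp add: algebra_simps)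
  then have "M * Gamma (a * real k + b) \<le> Gamma (a * real (Suc k) + b)"
    using M Gk by (meson mult_right_mono less_imp_le order_trans)
  then have "pochhammer g k * (g + real k) / (Gamma (a * real (Suc k) + b) * (fact k * (real k + 1)))
      \<le> pochhammer g k * (g + real k) / (M * Gamma (a * real k + b) * (fact k * (real k + 1)))"
    using g M Gk GSk pochhammer_pos[OF g, of k]
    by (intro divide_left_mono mult_right_mono) (auto intro!: mult_pos_pos)
  then show ?thesis
    unfolding prabhakar_coeff_def by (simp add: pochhammer_Suc field_simps)
qed

lemma summable_prabhakar_coeff:
  assumes g: "g > 0" and a: "0 < a" "a < 1" and b: "b > 0" and r: "r \<ge> 0"
  shows "summable (\<lambda>k. prabhakar_coeff g a b k * r ^ k)"
proof -
  define M where "M = 2 * (r + 1) * (g + 1)"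
  have "M > 0"
    unfolding M_def using g r by simp
  have "eventually (\<lambda>k::nat. (a * real k + b + a - 1) powr a \<ge> M \<and> a * real k + b + a - 1 > 0) at_top"
    using a by (intro eventually_conj; real_asymp)
  then obtain N where N: "\<And>k. k \<ge> N \<Longrightarrow>
      (a * real k + b + a - 1) powr a \<ge> M \<and> a * real k + b + a - 1 > 0"
    by (auto simp: eventually_at_top_linorder)
  show ?thesis
  proof (rule summable_ratio_test[of "1/2" N])
    fix k assume "k \<ge> N"
    have c0: "prabhakar_coeff g a b k \<ge> 0"
      using prabhakar_coeff_pos[OF g a(1) b] less_imp_le by blast
    have "(g + real k) * r \<le> (g + 1) * (real k + 1) * (r + 1)"
      using g r by (intro mult_mono) (auto simp: algebra_simps)
    also have "\<dots> = M * (real k + 1) / 2"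
      unfolding M_def by simp
    finally have "(g + real k) / (M * (real k + 1)) * r \<le> 1 / 2"
      using \<open>M > 0\<close> by (simp add: divide_simps)
    then have "prabhakar_coeff g a b k * r ^ k * ((g + real k) / (M * (real k + 1)) * r)
        \<le> prabhakar_coeff g a b k * r ^ k * (1 / 2)"
      using c0 r by (intro mult_left_mono) auto
    moreover have "prabhakar_coeff g a b (Suc k) * r ^ Suc k
        \<le> prabhakar_coeff g a b k * r ^ k * ((g + real k) / (M * (real k + 1)) * r)"
      using mult_right_mono[OF prabhakar_coeff_Suc_le[OF g a b _ \<open>M > 0\<close>], of k "r ^ Suc k"]
        N[OF \<open>k \<ge> N\<close>] r
      by (simp add: mult_ac)
    ultimately have "prabhakar_coeff g a b (Suc k) * r ^ Suc k \<le> prabhakar_coeff g a b k * r ^ k * (1 / 2)"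
      by (rule order_trans[rotated])
    then show "norm (prabhakar_coeff g a b (Suc k) * r ^ Suc k)
        \<le> 1 / 2 * norm (prabhakar_coeff g a b k * r ^ k)"
      using c0 prabhakar_coeff_pos[OF g a(1) b, of "Suc k"] r by (simp add: abs_mult mult_ac)
  qed simp
qed

lemma prabhakar_powser:
  "prabhakar g a b z = (\<Sum>k. complex_of_real (prabhakar_coeff g a b k) * z ^ k)"
  unfolding prabhakar_def prabhakar_coeff_def
  by (simp add: pochhammer_of_real[symmetric])

lemma summable_norm_prabhakar_powser:
  assumes "g > 0" "0 < a" "a < 1" "b > 0"
  shows "summable (\<lambda>k. norm (complex_of_real (prabhakar_coeff g a b k) * z ^ k))"
proof -
  have "\<bar>prabhakar_coeff g a b k\<bar> = prabhakar_coeff g a b k" for k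
    using prabhakar_coeff_pos[of g a b k] assms by simp
  then show ?thesis
    using summable_prabhakar_coeff[OF assms, of "norm z"] by (simp add: norm_mult norm_power)
qed

section \<open>Termwise integration of convolutions\<close>

lemma has_integral_Beta_interval:
  fixes p q t :: real
  assumes p: "p > 0" and q: "q > 0" and t: "t > 0"
  shows "((\<lambda>u. (t - u) powr (p - 1) * u powr (q - 1)) has_integral Beta p q * t powr (p + q - 1)) {0..t}"
proof -
  define f where "f s = s powr (q - 1) * (1 - s) powr (p - 1)" for s :: real
  have "((\<lambda>u. f ((1/t) * u)) has_integral (1 / \<bar>1/t\<bar>) *\<^sub>R Beta q p) ((\<lambda>u. u / (1/t)) ` {0..1})"
    unfolding f_def by (rule has_integral_stretch_real[OF has_integral_Beta_real]) (use p q t in auto)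
  moreover have "(\<lambda>u. u / (1/t)) ` {0..1} = {0..t}"
  proof (intro set_eqI iffI)
    fix u assume "u \<in> {0..t}"
    then have "u / t \<in> {0..1}" and "u = (u / t) / (1 / t)"
      using t by (auto simp: divide_simps)
    then show "u \<in> (\<lambda>u. u / (1/t)) ` {0..1}" by blast
  qed (use t in \<open>auto simp: mult_le_cancel_right1\<close>)
  ultimately have "((\<lambda>u. t powr (p + q - 2) * f ((1/t) * u)) has_integral
      t powr (p + q - 2) * (t * Beta q p)) {0..t}"
    using has_integral_mult_right[of _ "t * Beta q p" "{0..t}" "t powr (p + q - 2)"] t by simp
  moreover have "t powr (p + q - 2) * (t * Beta q p) = Beta p q * t powr (p + q - 1)"
    using t powr_add[of t "p + q - 2" 1] by (simp add: Beta_commute)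
  moreover have "t powr (p + q - 2) * f ((1/t) * u) = (t - u) powr (p - 1) * u powr (q - 1)"
    if "u \<in> {0..t}" for u
  proof -
    have "t powr (p + q - 2) * f ((1/t) * u)
        = (t powr (q - 1) * (u / t) powr (q - 1)) * (t powr (p - 1) * (1 - u / t) powr (p - 1))"
      unfolding f_def by (simp add: powr_add[symmetric] add_ac)
    also have "t powr (q - 1) * (u / t) powr (q - 1) = u powr (q - 1)"
      using t that by (simp add: powr_mult[symmetric])
    also have "t powr (p - 1) * (1 - u / t) powr (p - 1) = (t - u) powr (p - 1)"
      using t that by (simp add: powr_mult[symmetric] right_diff_distrib)
    finally show ?thesis by simp
  qed
  ultimately show ?thesis
    using has_integral_eq[of "{0..t}" "\<lambda>u. t powr (p + q - 2) * f ((1/t) * u)"] by simp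
qed

lemma integrable_on_suminf_nonneg:
  fixes H :: "nat \<Rightarrow> 'n::euclidean_space \<Rightarrow> real"
  assumes H: "\<And>m. (H m has_integral J m) S" and H0: "\<And>m u. u \<in> S \<Longrightarrow> H m u \<ge> 0"
    and J: "summable J" and H_sums: "\<And>u. u \<in> S \<Longrightarrow> (\<lambda>m. H m u) sums G u"
  shows "G integrable_on S"
proof (rule conjunct1[OF monotone_convergence_increasing])
  have int_partial: "((\<lambda>u. \<Sum>m<N. H m u) has_integral (\<Sum>m<N. J m)) S" for N
    by (intro has_integral_sum H) auto
  then show "(\<lambda>u. \<Sum>m<N. H m u) integrable_on S" for N
    by blast
  show "(\<Sum>m<N. H m u) \<le> (\<Sum>m<Suc N. H m u)" if "u \<in> S" for N u
    using H0[OF that] by simp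
  show "(\<lambda>N. \<Sum>m<N. H m u) \<longlonglongrightarrow> G u" if "u \<in> S" for u
    using H_sums[OF that] by (simp add: sums_def)
  have "J m \<ge> 0" for m
    using has_integral_nonneg[OF H H0] by blast
  then have "norm (\<Sum>m<N. J m) \<le> suminf J" for N
    using J by (simp add: sum_nonneg sum_le_suminf)
  then show "bounded (range (\<lambda>N. integral S (\<lambda>u. \<Sum>m<N. H m u)))"
    unfolding integral_unique[OF int_partial] bounded_iff by blast
qed

lemma has_integral_suminf_dominated:
  fixes h H :: "nat \<Rightarrow> 'n::euclidean_space \<Rightarrow> real"
  assumes h: "\<And>m. (h m has_integral I m) S" and H: "\<And>m. (H m has_integral J m) S"
    and dom: "\<And>m u. u \<in> S \<Longrightarrow> \<bar>h m u\<bar> \<le> H m u" and J: "summable J"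
    and h_sums: "\<And>u. u \<in> S \<Longrightarrow> (\<lambda>m. h m u) sums F u"
    and H_sums: "\<And>u. u \<in> S \<Longrightarrow> (\<lambda>m. H m u) sums G u"
  shows "(F has_integral suminf I) S"
proof (rule has_integral_dominated_convergence)
  have H0: "H m u \<ge> 0" if "u \<in> S" for m u
    using dom[OF that, of m] by linarith
  then show "G integrable_on S"
    using integrable_on_suminf_nonneg[OF H _ J H_sums] by blast
  show "((\<lambda>u. \<Sum>m<N. h m u) has_integral (\<Sum>m<N. I m)) S" for N
    by (intro has_integral_sum h) auto
  show "\<forall>u\<in>S. norm (\<Sum>m<N. h m u) \<le> G u" for N
  proof
    fix u assume "u \<in> S"
    have "norm (\<Sum>m<N. h m u) \<le> (\<Sum>m<N. H m u)"
      unfolding real_norm_def using dom[OF \<open>u \<in> S\<close>] by (rule order_trans[OF sum_abs sum_mono])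
    also have "\<dots> \<le> (\<Sum>m. H m u)"
      using H_sums[OF \<open>u \<in> S\<close>] H0[OF \<open>u \<in> S\<close>] by (intro sum_le_suminf) (auto simp: sums_iff)
    also have "\<dots> = G u"
      using H_sums[OF \<open>u \<in> S\<close>] by (simp add: sums_iff)
    finally show "norm (\<Sum>m<N. h m u) \<le> G u" .
  qed
  show "\<forall>u\<in>S. (\<lambda>N. \<Sum>m<N. h m u) \<longlonglongrightarrow> F u"
    using h_sums by (simp add: sums_def)
  have "\<bar>I m\<bar> \<le> J m" for m
    using dom has_integral_le[OF h H] has_integral_le[OF has_integral_neg[OF h] H]
    by (auto simp: abs_le_iff)
  then have "summable I"
    by (intro summable_comparison_test[OF _ J]) auto
  then show "(\<lambda>N. \<Sum>m<N. I m) \<longlonglongrightarrow> suminf I"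
    by (simp add: summable_LIMSEQ)
qed

lemma has_integral_powr_series_convolution:
  fixes A B p q :: "nat \<Rightarrow> real" and t :: real
  defines "K i k \<equiv> Beta (p i) (q k) * t powr (p i + q k - 1)"
  assumes t: "t > 0" and p: "\<And>i. p i > 0" and q: "\<And>k. q k > 0"
    and sA: "\<And>x. x \<in> {0..t} \<Longrightarrow> summable (\<lambda>i. \<bar>A i\<bar> * x powr (p i - 1))"
    and sB: "\<And>x. x \<in> {0..t} \<Longrightarrow> summable (\<lambda>k. \<bar>B k\<bar> * x powr (q k - 1))"
    and sK: "summable (\<lambda>m. \<Sum>i\<le>m. \<bar>A i\<bar> * \<bar>B (m - i)\<bar> * K i (m - i))"
  shows "((\<lambda>u. (\<Sum>i. A i * (t - u) powr (p i - 1)) * (\<Sum>k. B k * u powr (q k - 1))) has_integral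
           (\<Sum>m. \<Sum>i\<le>m. A i * B (m - i) * K i (m - i))) {0..t}"
proof -
  define \<kappa> where "\<kappa> i k u = (t - u) powr (p i - 1) * u powr (q k - 1)" for i k u
  define h where "h m u = (\<Sum>i\<le>m. A i * B (m - i) * \<kappa> i (m - i) u)" for m u
  define H where "H m u = (\<Sum>i\<le>m. \<bar>A i\<bar> * \<bar>B (m - i)\<bar> * \<kappa> i (m - i) u)" for m u
  have \<kappa>: "(\<kappa> i k has_integral K i k) {0..t}" for i k
    unfolding \<kappa>_def[abs_def] K_def using has_integral_Beta_interval[OF p q t] .
  have h: "(h m has_integral (\<Sum>i\<le>m. A i * B (m - i) * K i (m - i))) {0..t}" for m
    unfolding h_def[abs_def] by (intro has_integral_sum has_integral_mult_right \<kappa>) auto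
  have H: "(H m has_integral (\<Sum>i\<le>m. \<bar>A i\<bar> * \<bar>B (m - i)\<bar> * K i (m - i))) {0..t}" for m
    unfolding H_def[abs_def] by (intro has_integral_sum has_integral_mult_right \<kappa>) auto
  have dom: "\<bar>h m u\<bar> \<le> H m u" if "u \<in> {0..t}" for m u
    unfolding h_def H_def by (rule order_trans[OF sum_abs sum_mono]) (auto simp: abs_mult \<kappa>_def)
  have h_sums: "(\<lambda>m. h m u) sums ((\<Sum>i. A i * (t - u) powr (p i - 1)) * (\<Sum>k. B k * u powr (q k - 1)))"
    and H_sums: "(\<lambda>m. H m u) sums ((\<Sum>i. \<bar>A i\<bar> * (t - u) powr (p i - 1)) * (\<Sum>k. \<bar>B k\<bar> * u powr (q k - 1)))"
    if u: "u \<in> {0..t}" for u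
  proof -
    have "summable (\<lambda>i. norm (A i * (t - u) powr (p i - 1)))"
      and "summable (\<lambda>k. norm (B k * u powr (q k - 1)))"
      using sA[of "t - u"] sB[of u] u by (simp_all add: abs_mult)
    from Cauchy_product_sums[OF this]
    show "(\<lambda>m. h m u) sums ((\<Sum>i. A i * (t - u) powr (p i - 1)) * (\<Sum>k. B k * u powr (q k - 1)))"
      by (simp add: h_def \<kappa>_def mult_ac)
    have "summable (\<lambda>i. norm (\<bar>A i\<bar> * (t - u) powr (p i - 1)))"
      and "summable (\<lambda>k. norm (\<bar>B k\<bar> * u powr (q k - 1)))"
      using sA[of "t - u"] sB[of u] u by simp_all
    from Cauchy_product_sums[OF this]
    show "(\<lambda>m. H m u) sums ((\<Sum>i. \<bar>A i\<bar> * (t - u) powr (p i - 1)) * (\<Sum>k. \<bar>B k\<bar> * u powr (q k - 1)))"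
      by (simp add: H_def \<kappa>_def mult_ac)
  qed
  show ?thesis
    by (rule has_integral_suminf_dominated[OF h H dom sK h_sums H_sums])
qed

section \<open>The convolution semigroup of Prabhakar kernels\<close>

lemma powr_mult_power_powr:
  "(x::real) \<ge> 0 \<Longrightarrow> x powr (b - 1) * (x powr a) ^ k = x powr (a * real k + b - 1)"
proof (cases "x = 0")
  case False
  assume "x \<ge> 0"
  with False have "x > 0" by simp
  then show ?thesis by (simp add: powr_power powr_add[symmetric] algebra_simps)
qed simp

text \<open>The real form of \<open>x^(b-1) E^g_{a,b}(-x^a)\<close>, expanded termwise so that its convolutions
  reduce to Beta integrals.\<close>
definition prabhakar_kernel :: "real \<Rightarrow> real \<Rightarrow> real \<Rightarrow> real \<Rightarrow> real" where
  "prabhakar_kernel g a b x = (\<Sum>k. prabhakar_coeff g a b k * (-1) ^ k * x powr (a * real k + b - 1))"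

lemma summable_prabhakar_kernel:
  assumes "g > 0" "0 < a" "a < 1" "b > 0" and x: "x \<ge> 0"
  shows "summable (\<lambda>k. prabhakar_coeff g a b k * x powr (a * real k + b - 1))"
proof -
  have "summable (\<lambda>k. x powr (b - 1) * (prabhakar_coeff g a b k * (x powr a) ^ k))"
    using assms by (intro summable_mult summable_prabhakar_coeff) auto
  moreover have "x powr (b - 1) * (prabhakar_coeff g a b k * (x powr a) ^ k)
      = prabhakar_coeff g a b k * x powr (a * real k + b - 1)" for k
    unfolding powr_mult_power_powr[OF x, symmetric] by (rule mult.left_commute)
  ultimately show ?thesis
    by simp
qed

lemma prabhakar_kernel_sums:
  assumes "g > 0" "0 < a" "a < 1" "b > 0" "x \<ge> 0"
  shows "(\<lambda>k. prabhakar_coeff g a b k * (-1) ^ k * x powr (a * real k + b - 1)) sums prabhakar_kernel g a b x"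
proof -
  have abs_term: "\<bar>prabhakar_coeff g a b k * (-1) ^ k * x powr (a * real k + b - 1)\<bar>
      = prabhakar_coeff g a b k * x powr (a * real k + b - 1)" for k
    by (simp add: abs_mult power_abs abs_of_pos[OF prabhakar_coeff_pos[OF assms(1,2,4)]])
  have "summable (\<lambda>k. \<bar>prabhakar_coeff g a b k * (-1) ^ k * x powr (a * real k + b - 1)\<bar>)"
    unfolding abs_term by (rule summable_prabhakar_kernel[OF assms])
  then show ?thesis
    unfolding prabhakar_kernel_def by (rule summable_sums[OF summable_rabs_cancel])
qed

lemma prabhakar_of_real:
  assumes "g > 0" "0 < a" "a < 1" "b > 0"
  shows "prabhakar g a b (of_real r) = of_real (\<Sum>k. prabhakar_coeff g a b k * r ^ k)"
proof -
  have norm_term: "norm (complex_of_real (prabhakar_coeff g a b k) * of_real r ^ k)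
      = norm (prabhakar_coeff g a b k * r ^ k)" for k
    by (simp add: norm_mult norm_power abs_mult power_abs)
  have "summable (\<lambda>k. prabhakar_coeff g a b k * r ^ k)"
    using summable_norm_prabhakar_powser[OF assms, of "of_real r"]
    unfolding norm_term by (rule summable_norm_cancel)
  then have "(\<lambda>k. complex_of_real (prabhakar_coeff g a b k * r ^ k)) sums of_real (\<Sum>k. prabhakar_coeff g a b k * r ^ k)"
    by (intro sums_of_real summable_sums)
  then show ?thesis
    unfolding prabhakar_powser by (simp add: sums_iff)
qed

lemma of_real_prabhakar_kernel:
  assumes "g > 0" "0 < a" "a < 1" "b > 0" and x: "x \<ge> 0"
  shows "complex_of_real (prabhakar_kernel g a b x)
           = of_real (x powr (b - 1)) * prabhakar g a b (- of_real (x powr a))"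
proof -
  have "summable (\<lambda>k. prabhakar_coeff g a b k * (- (x powr a)) ^ k)"
  proof -
    have norm_term: "norm (complex_of_real (prabhakar_coeff g a b k) * (- of_real (x powr a)) ^ k)
        = norm (prabhakar_coeff g a b k * (- (x powr a)) ^ k)" for k
      by (simp add: norm_mult norm_power abs_mult power_abs)
    show ?thesis
      using summable_norm_prabhakar_powser[OF assms(1-4), of "- of_real (x powr a)"]
      unfolding norm_term by (rule summable_norm_cancel)
  qed
  then have "x powr (b - 1) * (\<Sum>k. prabhakar_coeff g a b k * (- (x powr a)) ^ k)
      = (\<Sum>k. x powr (b - 1) * (prabhakar_coeff g a b k * (- (x powr a)) ^ k))"
    by (rule suminf_mult[symmetric])
  also have "\<dots> = prabhakar_kernel g a b x"
    unfolding prabhakar_kernel_def power_minus[of "x powr a"] powr_mult_power_powr[OF x, symmetric]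
    by (simp only: mult_ac)
  finally have "complex_of_real (prabhakar_kernel g a b x)
      = of_real (x powr (b - 1)) * of_real (\<Sum>k. prabhakar_coeff g a b k * (- (x powr a)) ^ k)"
    by (metis of_real_mult)
  also have "of_real (\<Sum>k. prabhakar_coeff g a b k * (- (x powr a)) ^ k) = prabhakar g a b (- of_real (x powr a))"
    using prabhakar_of_real[OF assms(1-4), of "- (x powr a)"] by (simp only: of_real_minus)
  finally show ?thesis .
qed

lemma pochhammer_add_div_fact:
  fixes g1 g2 :: "'a::field_char_0"
  shows "(\<Sum>i\<le>m. pochhammer g1 i / fact i * (pochhammer g2 (m - i) / fact (m - i)))
           = pochhammer (g1 + g2) m / fact m"
proof -
  have "pochhammer (g1 + g2) m / fact m = (\<Sum>i\<le>m. of_nat (m choose i) * pochhammer g1 i * pochhammer g2 (m - i) / fact m)"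
    by (simp add: pochhammer_binomial_sum sum_divide_distrib)
  also have "\<dots> = (\<Sum>i\<le>m. pochhammer g1 i / fact i * (pochhammer g2 (m - i) / fact (m - i)))"
    by (intro sum.cong refl) (simp add: binomial_fact field_simps)
  finally show ?thesis ..
qed

lemma prabhakar_coeff_convolution:
  assumes a: "a > 0" and b: "b1 > 0" "b2 > 0"
  shows "(\<Sum>i\<le>m. prabhakar_coeff g1 a b1 i * prabhakar_coeff g2 a b2 (m - i)
                  * Beta (a * real i + b1) (a * real (m - i) + b2))
           = prabhakar_coeff (g1 + g2) a (b1 + b2) m"
proof -
  have "prabhakar_coeff g1 a b1 i * prabhakar_coeff g2 a b2 (m - i) * Beta (a * real i + b1) (a * real (m - i) + b2)
      = pochhammer g1 i / fact i * (pochhammer g2 (m - i) / fact (m - i)) / Gamma (a * real m + (b1 + b2))"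
    if "i \<in> {..m}" for i
  proof -
    have "a * real i + b1 + (a * real (m - i) + b2) = a * real m + (b1 + b2)"
      using that by (simp add: of_nat_diff algebra_simps)
    then have "Beta (a * real i + b1) (a * real (m - i) + b2)
        = Gamma (a * real i + b1) * Gamma (a * real (m - i) + b2) / Gamma (a * real m + (b1 + b2))"
      unfolding Beta_def by (simp only:)
    moreover have "Gamma (a * real i + b1) > 0" "Gamma (a * real (m - i) + b2) > 0"
      using a b by (auto intro!: Gamma_real_pos add_nonneg_pos)
    ultimately show ?thesis
      unfolding prabhakar_coeff_def by (simp add: field_simps)
  qed
  then have "(\<Sum>i\<le>m. prabhakar_coeff g1 a b1 i * prabhakar_coeff g2 a b2 (m - i)
                  * Beta (a * real i + b1) (a * real (m - i) + b2))
      = (\<Sum>i\<le>m. pochhammer g1 i / fact i * (pochhammer g2 (m - i) / fact (m - i))) / Gamma (a * real m + (b1 + b2))"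
    unfolding sum_divide_distrib by (rule sum.cong[OF refl])
  then show ?thesis
    unfolding pochhammer_add_div_fact prabhakar_coeff_def by simp
qed

lemma prabhakar_coeff_convolution_powr:
  assumes a: "a > 0" and b: "b1 > 0" "b2 > 0"
  shows "(\<Sum>i\<le>m. prabhakar_coeff g1 a b1 i * prabhakar_coeff g2 a b2 (m - i)
            * (Beta (a * real i + b1) (a * real (m - i) + b2)
               * t powr (a * real i + b1 + (a * real (m - i) + b2) - 1)))
           = prabhakar_coeff (g1 + g2) a (b1 + b2) m * t powr (a * real m + (b1 + b2) - 1)"
proof -
  have "t powr (a * real i + b1 + (a * real (m - i) + b2) - 1) = t powr (a * real m + (b1 + b2) - 1)"
    if "i \<in> {..m}" for i
    using that by (simp add: of_nat_diff algebra_simps)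
  then show ?thesis
    unfolding prabhakar_coeff_convolution[OF assms, symmetric] sum_distrib_right
    by (intro sum.cong refl) (simp add: mult.assoc)
qed

lemma has_integral_prabhakar_kernel_convolution:
  assumes g: "g1 > 0" "g2 > 0" and a: "0 < a" "a < 1" and b: "b1 > 0" "b2 > 0" and t: "t > 0"
  shows "((\<lambda>u. prabhakar_kernel g1 a b1 (t - u) * prabhakar_kernel g2 a b2 u)
           has_integral prabhakar_kernel (g1 + g2) a (b1 + b2) t) {0..t}"
proof -
  define A where "A i = prabhakar_coeff g1 a b1 i * (-1) ^ i" for i
  define B where "B k = prabhakar_coeff g2 a b2 k * (-1) ^ k" for k
  define p where "p i = a * real i + b1" for i
  define q where "q k = a * real k + b2" for k
  define D where "D m = (\<Sum>i\<le>m. \<bar>A i\<bar> * \<bar>B (m - i)\<bar> * (Beta (p i) (q (m - i)) * t powr (p i + q (m - i) - 1)))" for m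
  have abs_A: "\<bar>A i\<bar> = prabhakar_coeff g1 a b1 i" and abs_B: "\<bar>B i\<bar> = prabhakar_coeff g2 a b2 i" for i
    using prabhakar_coeff_pos[OF g(1) a(1) b(1), of i] prabhakar_coeff_pos[OF g(2) a(1) b(2), of i]
    by (simp_all add: A_def B_def abs_mult power_abs)
  have sign: "A i * B (m - i) = (-1) ^ m * (\<bar>A i\<bar> * \<bar>B (m - i)\<bar>)" if "i \<le> m" for i m
  proof -
    have "(-1::real) ^ i * (-1) ^ (m - i) = (-1) ^ m"
      using that by (simp flip: power_add)
    then show ?thesis
      unfolding abs_A abs_B by (simp add: A_def B_def mult_ac)
  qed
  have D: "D m = prabhakar_coeff (g1 + g2) a (b1 + b2) m * t powr (a * real m + (b1 + b2) - 1)" for m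
    unfolding D_def abs_A abs_B p_def q_def by (rule prabhakar_coeff_convolution_powr[OF a(1) b])
  have "((\<lambda>u. (\<Sum>i. A i * (t - u) powr (p i - 1)) * (\<Sum>k. B k * u powr (q k - 1))) has_integral
      (\<Sum>m. \<Sum>i\<le>m. A i * B (m - i) * (Beta (p i) (q (m - i)) * t powr (p i + q (m - i) - 1)))) {0..t}"
  proof (rule has_integral_powr_series_convolution[OF t])
    show "p i > 0" "q i > 0" for i
      using a b by (simp_all add: p_def q_def add_nonneg_pos)
    show "summable (\<lambda>i. \<bar>A i\<bar> * x powr (p i - 1))" "summable (\<lambda>i. \<bar>B i\<bar> * x powr (q i - 1))"
      if "x \<in> {0..t}" for x
      unfolding abs_A abs_B p_def q_def using that g a b
      by (auto intro!: summable_prabhakar_kernel)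
    have "summable D"
      unfolding D using g a b t by (intro summable_prabhakar_kernel) auto
    then show "summable (\<lambda>m. \<Sum>i\<le>m. \<bar>A i\<bar> * \<bar>B (m - i)\<bar> * (Beta (p i) (q (m - i)) * t powr (p i + q (m - i) - 1)))"
      unfolding D_def .
  qed
  moreover have "(\<Sum>i\<le>m. A i * B (m - i) * (Beta (p i) (q (m - i)) * t powr (p i + q (m - i) - 1)))
      = prabhakar_coeff (g1 + g2) a (b1 + b2) m * (-1) ^ m * t powr (a * real m + (b1 + b2) - 1)" for m
  proof -
    have "(\<Sum>i\<le>m. A i * B (m - i) * (Beta (p i) (q (m - i)) * t powr (p i + q (m - i) - 1))) = (-1) ^ m * D m"
      unfolding D_def sum_distrib_left by (rule sum.cong[OF refl]) (simp add: sign)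
    then show ?thesis
      unfolding D by simp
  qed
  ultimately show ?thesis
    unfolding prabhakar_kernel_def A_def B_def p_def q_def by simp
qed

lemma phi_ml_eq_prabhakar_kernel:
  "0 < a \<Longrightarrow> a < 1 \<Longrightarrow> t \<ge> 0 \<Longrightarrow> phi_ml a t = of_real (prabhakar_kernel 1 a a t)"
  unfolding phi_ml_def ML2_def by (simp add: of_real_prabhakar_kernel)

lemma conv_pow_phi_ml:
  assumes a: "0 < a" "a < 1" and t: "t \<ge> 0"
  shows "conv_pow (phi_ml a) (Suc n) t = of_real (prabhakar_kernel (Suc n) a (a * Suc n) t)"
  using t
proof (induction n arbitrary: t)
  case 0
  then show ?case
    using phi_ml_eq_prabhakar_kernel[OF a] by simp
next
  case (Suc n)
  show ?case
  proof (cases "t = 0")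
    case True
    \<comment> \<open>both sides vanish: the integral is over \<open>{0..0}\<close> and \<open>0 powr _ = 0\<close>\<close>
    then show ?thesis
      by (simp add: lconv_def prabhakar_kernel_def)
  next
    case False
    with Suc.prems have "t > 0" by simp
    have "((\<lambda>u. prabhakar_kernel (Suc n) a (a * Suc n) (t - u) * prabhakar_kernel 1 a a u)
        has_integral prabhakar_kernel (Suc (Suc n)) a (a * Suc (Suc n)) t) {0..t}"
      using has_integral_prabhakar_kernel_convolution[of "Suc n" 1 a "a * Suc n" a t] a \<open>t > 0\<close>
      by (simp add: algebra_simps add_pos_nonneg)
    then have "((\<lambda>u. conv_pow (phi_ml a) (Suc n) (t - u) * phi_ml a u)
        has_integral of_real (prabhakar_kernel (Suc (Suc n)) a (a * Suc (Suc n)) t)) {0..t}"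
      by (rule has_integral_eq[OF _ has_integral_of_real, rotated])
         (simp add: Suc.IH phi_ml_eq_prabhakar_kernel[OF a])
    then show ?thesis
      unfolding conv_pow.simps lconv_def by (rule integral_unique)
  qed
qed

section \<open>Summing the weighted convolution powers\<close>

lemma has_sum_binomial_diagonals:
  fixes c :: "nat \<Rightarrow> complex" and w :: complex
  assumes summable_c: "summable (\<lambda>m. norm (c m) * (1 + norm w) ^ m)"
  shows "((\<lambda>(m, n). c m * of_nat (m choose n) * w ^ n * (-1) ^ (m - n)) has_sum (\<Sum>m. c m * (w - 1) ^ m))
           (SIGMA m:UNIV. {..m})"
proof (rule has_sum_SigmaI)
  let ?G = "\<lambda>(m, n). c m * of_nat (m choose n) * w ^ n * (-1) ^ (m - n)"
  show "((\<lambda>n. ?G (m, n)) has_sum c m * (w - 1) ^ m) {..m}" for m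
  proof -
    have "(\<Sum>n\<le>m. ?G (m, n)) = c m * (\<Sum>n\<le>m. of_nat (m choose n) * w ^ n * (-1) ^ (m - n))"
      by (simp add: sum_distrib_left mult_ac)
    also have "\<dots> = c m * (w - 1) ^ m"
      using binomial_ring[of w "-1" m] by simp
    finally show ?thesis
      by (intro has_sum_finiteI) auto
  qed
  have norm_summable: "summable (\<lambda>m. norm (c m * (w - 1) ^ m))"
  proof (rule summable_comparison_test[OF _ summable_c], intro exI allI impI)
    fix m :: nat
    have "norm (w - 1) ^ m \<le> (1 + norm w) ^ m"
      using norm_triangle_ineq4[of w 1] by (intro power_mono) auto
    then show "norm (norm (c m * (w - 1) ^ m)) \<le> norm (c m) * (1 + norm w) ^ m"
      by (simp add: norm_mult norm_power mult_left_mono)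
  qed
  then show "((\<lambda>m. c m * (w - 1) ^ m) has_sum (\<Sum>m. c m * (w - 1) ^ m)) UNIV"
    by (rule norm_summable_imp_has_sum[OF _ summable_sums[OF summable_norm_cancel[OF norm_summable]]])
  have "(\<lambda>p. norm (?G p)) summable_on (SIGMA m:UNIV. {..m})"
  proof (rule summable_on_SigmaI[where g = "\<lambda>m. norm (c m) * (1 + norm w) ^ m"])
    fix m :: nat
    have "(\<Sum>n\<le>m. norm (?G (m, n))) = norm (c m) * (\<Sum>n\<le>m. of_nat (m choose n) * norm w ^ n * 1 ^ (m - n))"
      by (simp add: norm_mult norm_power sum_distrib_left mult_ac)
    also have "\<dots> = norm (c m) * (1 + norm w) ^ m"
      using binomial_ring[of "norm w" 1 m] by (simp add: add.commute)
    finally show "((\<lambda>n. norm (?G (m, n))) has_sum norm (c m) * (1 + norm w) ^ m) {..m}"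
      by (intro has_sum_finiteI) auto
  next
    show "(\<lambda>m. norm (c m) * (1 + norm w) ^ m) summable_on UNIV"
      using summable_c by (subst summable_on_UNIV_nonneg_real_iff) auto
  qed auto
  then show "?G summable_on (SIGMA m:UNIV. {..m})"
    by (rule abs_summable_summable)
qed

lemma sums_binomial_rearrangement:
  fixes c :: "nat \<Rightarrow> complex" and w :: complex
  assumes summable_c: "summable (\<lambda>m. norm (c m) * (1 + norm w) ^ m)"
    and rows: "\<And>n. (\<lambda>k. c (n + k) * of_nat ((n + k) choose n) * w ^ n * (-1) ^ k) sums T n"
  shows "T sums (\<Sum>m. c m * (w - 1) ^ m)"
proof -
  define F where "F n k = c (n + k) * of_nat ((n + k) choose n) * w ^ n * (-1) ^ k" for n k
  define S where "S = (\<Sum>m. c m * (w - 1) ^ m)"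
  have "((\<lambda>(n, k). F n k) has_sum S) (UNIV \<times> UNIV)
      \<longleftrightarrow> ((\<lambda>(m, n). c m * of_nat (m choose n) * w ^ n * (-1) ^ (m - n)) has_sum S) (SIGMA m:UNIV. {..m})"
    by (rule has_sum_reindex_bij_witness[where i = "\<lambda>(m, n). (n, m - n)" and j = "\<lambda>(n, k). (n + k, n)"])
       (auto simp: F_def)
  with has_sum_binomial_diagonals[OF summable_c]
  have F_sum: "((\<lambda>(n, k). F n k) has_sum S) (Sigma UNIV (\<lambda>_. UNIV))"
    unfolding S_def by simp
  have "(F n has_sum T n) UNIV" for n
  proof -
    have "(\<lambda>(n, k). F n k) summable_on Sigma UNIV (\<lambda>_. UNIV)"
      using F_sum by (auto simp: summable_on_def)
    then have "F n summable_on UNIV"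
      by (rule summable_on_SigmaD1) simp
    then have F_n: "(F n has_sum infsum (F n) UNIV) UNIV"
      by (rule has_sum_infsum)
    have "infsum (F n) UNIV = T n"
    proof (rule sums_unique2)
      show "F n sums infsum (F n) UNIV"
        using F_n by (rule has_sum_imp_sums)
      show "F n sums T n"
        unfolding F_def by (rule rows)
    qed
    with F_n show ?thesis
      by (simp only:)
  qed
  then have "(T has_sum S) UNIV"
    by (intro has_sum_SigmaD[OF F_sum]) simp
  then show ?thesis
    unfolding S_def by (rule has_sum_imp_sums)
qed

lemma prabhakar_coeff_shift:
  assumes L: "L > 0" and a: "a > 0"
  shows "pochhammer L n / fact n * prabhakar_coeff (L + real n) a (a * (L + real n)) k
           = prabhakar_coeff L a (L * a) (n + k) * real ((n + k) choose n)"
proof -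
  have "a * real k + a * (L + real n) = a * real (n + k) + L * a"
    by (simp add: algebra_simps)
  moreover have "Gamma (a * real (n + k) + L * a) > 0"
    using a L by (intro Gamma_real_pos add_nonneg_pos) auto
  ultimately show ?thesis
    unfolding prabhakar_coeff_def pochhammer_product' binomial_fact[OF le_add1]
    by (simp add: field_simps)
qed

lemma conv_pow_phi_ml_eq_prabhakar_kernel:
  assumes a: "0 < a" "a < 1" and m: "m \<ge> 1" and t: "t \<ge> 0"
  shows "conv_pow (phi_ml a) m t = of_real (prabhakar_kernel (real m) a (a * real m) t)"
  using conv_pow_phi_ml[OF a t, of "m - 1"] m by simp

text \<open>The coefficients of \<open>t^(L a - 1) E^L_{a,L a}(y t^a)\<close> as a power series in \<open>y\<close>.\<close>
definition scaled_prabhakar_coeff :: "real \<Rightarrow> real \<Rightarrow> real \<Rightarrow> nat \<Rightarrow> real" where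
  "scaled_prabhakar_coeff L a t m = prabhakar_coeff L a (L * a) m * t powr (a * real m + L * a - 1)"

lemma scaled_prabhakar_coeff_eq:
  "t \<ge> 0 \<Longrightarrow> scaled_prabhakar_coeff L a t m = t powr (L * a - 1) * (prabhakar_coeff L a (L * a) m * (t powr a) ^ m)"
  unfolding scaled_prabhakar_coeff_def powr_mult_power_powr[symmetric] by (rule mult.left_commute)

lemma summable_scaled_prabhakar_coeff:
  assumes "L > 0" "0 < a" "a < 1" "t \<ge> 0" "r \<ge> 0"
  shows "summable (\<lambda>m. scaled_prabhakar_coeff L a t m * r ^ m)"
proof -
  have "summable (\<lambda>m. t powr (L * a - 1) * (prabhakar_coeff L a (L * a) m * (t powr a * r) ^ m))"
    using assms by (intro summable_mult summable_prabhakar_coeff) auto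
  then show ?thesis
    using assms(4) by (simp add: scaled_prabhakar_coeff_eq power_mult_distrib mult_ac)
qed

lemma prabhakar_scaled_powser:
  assumes L: "L > 0" and a: "0 < a" "a < 1" and t: "t \<ge> 0"
  shows "of_real (t powr (L * a - 1)) * prabhakar L a (L * a) (y * of_real (t powr a))
           = (\<Sum>m. of_real (scaled_prabhakar_coeff L a t m) * y ^ m)"
proof -
  have "of_real (t powr (L * a - 1)) * prabhakar L a (L * a) (y * of_real (t powr a))
      = (\<Sum>m. of_real (t powr (L * a - 1)) * (of_real (prabhakar_coeff L a (L * a) m) * (y * of_real (t powr a)) ^ m))"
    unfolding prabhakar_powser
    by (rule suminf_mult[symmetric], rule summable_norm_cancel, rule summable_norm_prabhakar_powser)
       (use L a in auto)
  also have "\<dots> = (\<Sum>m. of_real (scaled_prabhakar_coeff L a t m) * y ^ m)"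
    using t by (simp add: scaled_prabhakar_coeff_eq power_mult_distrib mult_ac)
  finally show ?thesis .
qed

lemma sums_prabhakar_kernel_shift:
  fixes w :: complex
  assumes L: "L > 0" and a: "0 < a" "a < 1" and t: "t > 0"
  shows "(\<lambda>k. of_real (scaled_prabhakar_coeff L a t (n + k)) * of_nat ((n + k) choose n) * w ^ n * (-1) ^ k)
           sums (of_real (pochhammer L n / fact n) * w ^ n * of_real (prabhakar_kernel (L + real n) a (a * (L + real n)) t))"
proof -
  have kernel_sums: "(\<lambda>k. prabhakar_coeff (L + real n) a (a * (L + real n)) k * (-1) ^ k * t powr (a * real k + a * (L + real n) - 1))
      sums prabhakar_kernel (L + real n) a (a * (L + real n)) t"
    using L a t by (intro prabhakar_kernel_sums) auto
  have term_eq: "pochhammer L n / fact n * (prabhakar_coeff (L + real n) a (a * (L + real n)) k * (-1) ^ k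
        * t powr (a * real k + a * (L + real n) - 1))
      = scaled_prabhakar_coeff L a t (n + k) * real ((n + k) choose n) * (-1) ^ k" for k
  proof -
    have "a * real k + a * (L + real n) - 1 = a * real (n + k) + L * a - 1"
      by (simp add: algebra_simps)
    then have "pochhammer L n / fact n * (prabhakar_coeff (L + real n) a (a * (L + real n)) k * (-1) ^ k
          * t powr (a * real k + a * (L + real n) - 1))
        = (pochhammer L n / fact n * prabhakar_coeff (L + real n) a (a * (L + real n)) k)
          * ((-1) ^ k * t powr (a * real (n + k) + L * a - 1))"
      by (simp only: mult.assoc)
    also have "\<dots> = scaled_prabhakar_coeff L a t (n + k) * real ((n + k) choose n) * (-1) ^ k"
      unfolding prabhakar_coeff_shift[OF L a(1)] scaled_prabhakar_coeff_def by (simp only: mult_ac)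
    finally show ?thesis .
  qed
  from sums_mult[OF kernel_sums, of "pochhammer L n / fact n"]
  have "(\<lambda>k. scaled_prabhakar_coeff L a t (n + k) * real ((n + k) choose n) * (-1) ^ k)
      sums (pochhammer L n / fact n * prabhakar_kernel (L + real n) a (a * (L + real n)) t)"
    unfolding term_eq .
  from sums_mult[OF sums_of_real[OF this], of "w ^ n"] show ?thesis
    by (simp add: mult_ac)
qed

lemma conv_pow_phi_ml_series:
  fixes a t :: real and l :: nat and w :: complex
  assumes a: "0 < a" "a < 1" and l: "l \<ge> 1" and t: "t > 0"
  shows "(\<lambda>n. pochhammer (of_nat l) n / fact n * w ^ n * conv_pow (phi_ml a) (n + l) t)
           sums (of_real (t powr (real l * a - 1))
                   * prabhakar (real l) a (real l * a) (- (1 - w) * of_real (t powr a)))"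
proof -
  define c where "c m = complex_of_real (scaled_prabhakar_coeff (real l) a t m)" for m
  have L: "real l > 0"
    using l by simp
  have "scaled_prabhakar_coeff (real l) a t m \<ge> 0" for m
    using prabhakar_coeff_pos[OF L a(1), of "real l * a" m] L a
    by (simp add: scaled_prabhakar_coeff_def)
  then have "norm (c m) = scaled_prabhakar_coeff (real l) a t m" for m
    by (simp add: c_def)
  then have "summable (\<lambda>m. norm (c m) * (1 + norm w) ^ m)"
    using summable_scaled_prabhakar_coeff[OF L a less_imp_le[OF t], of "1 + norm w"] by simp
  moreover have "(\<lambda>k. c (n + k) * of_nat ((n + k) choose n) * w ^ n * (-1) ^ k) sums
      (pochhammer (of_nat l) n / fact n * w ^ n * conv_pow (phi_ml a) (n + l) t)" for n
    using sums_prabhakar_kernel_shift[OF L a t, of n w]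
      conv_pow_phi_ml_eq_prabhakar_kernel[OF a, of "n + l" t] l t
    by (simp add: c_def add.commute mult.commute flip: pochhammer_of_real)
  ultimately have "(\<lambda>n. pochhammer (of_nat l) n / fact n * w ^ n * conv_pow (phi_ml a) (n + l) t)
      sums (\<Sum>m. c m * (w - 1) ^ m)"
    by (rule sums_binomial_rearrangement)
  moreover have "- (1 - w) = w - 1"
    by simp
  ultimately show ?thesis
    unfolding c_def prabhakar_scaled_powser[OF L a less_imp_le[OF t], symmetric]
    by (simp add: mult.commute)
qed

section \<open>Derivatives of the Mittag-Leffler function\<close>

lemma funpow_diffs: "(diffs ^^ m) e k = pochhammer (of_nat k + 1) m * (e (k + m) :: 'a::comm_ring_1)"
proof (induction m arbitrary: k)
  case (Suc m)
  have "(diffs ^^ Suc m) e k = of_nat (Suc k) * (pochhammer (of_nat (Suc k) + 1) m * e (Suc k + m))"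
    by (simp add: diffs_def Suc.IH)
  also have "\<dots> = pochhammer (of_nat k + 1) (Suc m) * e (k + Suc m)"
    by (simp add: pochhammer_rec add_ac)
  finally show ?case .
qed simp

lemma funpow_deriv_powser:
  fixes e :: "nat \<Rightarrow> complex"
  assumes "\<And>z. summable (\<lambda>k. e k * z ^ k)"
  shows "(deriv ^^ m) (\<lambda>z. \<Sum>k. e k * z ^ k) = (\<lambda>z. \<Sum>k. (diffs ^^ m) e k * z ^ k)
         \<and> (\<forall>z. summable (\<lambda>k. (diffs ^^ m) e k * z ^ k))"
proof (induction m)
  case (Suc m)
  then have IH: "(deriv ^^ m) (\<lambda>z. \<Sum>k. e k * z ^ k) = (\<lambda>z. \<Sum>k. (diffs ^^ m) e k * z ^ k)"
    and summable: "\<And>z. summable (\<lambda>k. (diffs ^^ m) e k * z ^ k)"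
    by auto
  have "deriv (\<lambda>z. \<Sum>k. (diffs ^^ m) e k * z ^ k) z = (\<Sum>k. diffs ((diffs ^^ m) e) k * z ^ k)" for z
    by (rule DERIV_imp_deriv, rule termdiffs_strong_converges_everywhere) (rule summable)
  then show ?case
    using IH termdiff_converges_all[of "(diffs ^^ m) e", OF summable] by auto
qed (use assms in simp)

lemma funpow_deriv_ML2:
  assumes a: "0 < a" "a < 1"
  shows "(deriv ^^ m) (ML2 a a) z = fact m * prabhakar (real m + 1) a (a * (real m + 1)) z"
proof -
  define e where "e k = complex_of_real (prabhakar_coeff 1 a a k)" for k
  have "ML2 a a = (\<lambda>z. \<Sum>k. e k * z ^ k)"
    unfolding ML2_def e_def prabhakar_powser by simp
  moreover have "summable (\<lambda>k. e k * z ^ k)" for z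
    unfolding e_def using a by (intro summable_norm_cancel[OF summable_norm_prabhakar_powser]) auto
  ultimately have "(deriv ^^ m) (ML2 a a) z = (\<Sum>k. (diffs ^^ m) e k * z ^ k)"
    using funpow_deriv_powser[of e m] by simp
  also have "(diffs ^^ m) e k = fact m * of_real (prabhakar_coeff (real m + 1) a (a * (real m + 1)) k)" for k
  proof -
    have "pochhammer (real k + 1) m * fact k = pochhammer (real m + 1) k * fact m"
      using pochhammer_product'[of "1::real" k m] pochhammer_product'[of "1::real" m k]
      by (simp add: pochhammer_fact[symmetric] add_ac mult_ac)
    moreover have "a * real (k + m) + a = a * real k + a * (real m + 1)"
      by (simp add: algebra_simps)
    moreover have "Gamma (a * real k + a * (real m + 1)) > 0"
      using a by (intro Gamma_real_pos add_nonneg_pos) auto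
    ultimately have "pochhammer (real k + 1) m * prabhakar_coeff 1 a a (k + m)
        = fact m * prabhakar_coeff (real m + 1) a (a * (real m + 1)) k"
      unfolding prabhakar_coeff_def by (simp add: pochhammer_fact[symmetric] field_simps)
    then have "complex_of_real (pochhammer (real k + 1) m) * of_real (prabhakar_coeff 1 a a (k + m))
        = fact m * of_real (prabhakar_coeff (real m + 1) a (a * (real m + 1)) k)"
      by (metis of_real_mult of_real_fact)
    moreover have "pochhammer (of_nat k + 1) m = complex_of_real (pochhammer (real k + 1) m)"
      using pochhammer_of_real[of "real k + 1" m] by simp
    ultimately show ?thesis
      unfolding funpow_diffs e_def by simp
  qed
  then have "(\<Sum>k. (diffs ^^ m) e k * z ^ k)
      = (\<Sum>k. fact m * (of_real (prabhakar_coeff (real m + 1) a (a * (real m + 1)) k) * z ^ k))"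
    by (simp add: mult.assoc)
  also have "\<dots> = fact m * prabhakar (real m + 1) a (a * (real m + 1)) z"
    unfolding prabhakar_powser using a
    by (intro suminf_mult summable_norm_cancel[OF summable_norm_prabhakar_powser]) auto
  finally show ?thesis .
qed

lemma conv_pow_phi_ml_eq_funpow_deriv_ML2:
  assumes a: "0 < a" "a < 1" and t: "t > 0"
  shows "conv_pow (phi_ml a) (Suc m) t
           = of_real (t powr (a * (real m + 1) - 1)) / fact m * (deriv ^^ m) (ML2 a a) (- of_real (t powr a))"
proof -
  have "conv_pow (phi_ml a) (Suc m) t = of_real (prabhakar_kernel (real m + 1) a (a * (real m + 1)) t)"
    using conv_pow_phi_ml[OF a, of t m] t by (simp add: add.commute)
  also have "\<dots> = of_real (t powr (a * (real m + 1) - 1))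
      * prabhakar (real m + 1) a (a * (real m + 1)) (- of_real (t powr a))"
    using a t by (intro of_real_prabhakar_kernel) (auto intro: add_pos_nonneg)
  finally show ?thesis
    by (simp add: funpow_deriv_ML2[OF a])
qed

theorem mainTheorem9:
  fixes \<alpha> :: real and l :: nat and w :: complex and t :: real
  assumes "0 < \<alpha>" and "\<alpha> < 1" and "l \<ge> 1" and "norm w \<le> 1" and "0 < t"
  shows "(\<lambda>n. pochhammer (of_nat l) n / fact n * w ^ n * conv_pow (phi_ml \<alpha>) (n + l) t)
           sums (complex_of_real (t powr (real l * \<alpha> - 1))
                   * prabhakar (real l) \<alpha> (real l * \<alpha>) (- (1 - w) * complex_of_real (t powr \<alpha>)))
         \<and> (\<lambda>n. pochhammer (of_nat l) n / fact n * w ^ n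
              * (complex_of_real (t powr (\<alpha> * real l - 1) * t powr (\<alpha> * real n)) / fact (n + l - 1))
              * (deriv ^^ (n + l - 1)) (ML2 \<alpha> \<alpha>) (- complex_of_real (t powr \<alpha>)))
           sums (complex_of_real (t powr (real l * \<alpha> - 1))
                   * prabhakar (real l) \<alpha> (real l * \<alpha>) (- (1 - w) * complex_of_real (t powr \<alpha>)))"
proof -
  have a: "0 < \<alpha>" "\<alpha> < 1" and t: "t > 0"
    using assms by auto
  have "complex_of_real (t powr (\<alpha> * real l - 1) * t powr (\<alpha> * real n)) / fact (n + l - 1)
          * (deriv ^^ (n + l - 1)) (ML2 \<alpha> \<alpha>) (- complex_of_real (t powr \<alpha>))
        = conv_pow (phi_ml \<alpha>) (n + l) t" for n
  proof -
    have "n + l = Suc (n + l - 1)" and "real (n + l - 1) + 1 = real n + real l"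
      using \<open>l \<ge> 1\<close> by auto
    moreover have "t powr (\<alpha> * real l - 1) * t powr (\<alpha> * real n) = t powr (\<alpha> * (real n + real l) - 1)"
      using t by (simp add: powr_add[symmetric] algebra_simps)
    ultimately show ?thesis
      using conv_pow_phi_ml_eq_funpow_deriv_ML2[OF a t, of "n + l - 1"] by simp
  qed
  then have "(\<lambda>n. pochhammer (of_nat l) n / fact n * w ^ n
              * (complex_of_real (t powr (\<alpha> * real l - 1) * t powr (\<alpha> * real n)) / fact (n + l - 1))
              * (deriv ^^ (n + l - 1)) (ML2 \<alpha> \<alpha>) (- complex_of_real (t powr \<alpha>)))
      = (\<lambda>n. pochhammer (of_nat l) n / fact n * w ^ n * conv_pow (phi_ml \<alpha>) (n + l) t)"
    by (simp only: mult.assoc)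
  then show ?thesis
    using conv_pow_phi_ml_series[OF a \<open>l \<ge> 1\<close> t, of w] by simp
qed

end
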